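(* Let $n\in\mathbb{N}$ and let $q$ be a natural number with $q\ge n(n-1)/2$. Then the complete graph $K_n$ can be embedded in any projective plane of order $q$.
   Context: A finite projective plane of order $q$ has $q^2+q+1$ points and lines, $q+1$ points on each line and $q+1$ lines through each point; any two distinct points lie on a unique line and any two lines meet in a unique point. An embedding of a simple graph $G=(V,E)$ into a projective plane is an injective map $\phi$ from $V$ to the points such that the induced map sending an edge $ab$ to the line through $\phi(a),\phi(b)$ is injective on $E$. *)

theory Defs
  imports Main
begin

definition proj_plane_of_order :: "'p set \<Rightarrow> 'l set \<Rightarrow> ('p \<Rightarrow> 'l \<Rightarrow> bool) \<Rightarrow> nat \<Rightarrow> bool" where
  "proj_plane_of_order P L I q \<longleftrightarrow>
     finite P \<and> finite L \<and>
     card P = q^2 + q + 1 \<and> card L = q^2 + q + 1 \<and>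
     (\<forall>l\<in>L. card {p\<in>P. I p l} = q + 1) \<and>
     (\<forall>p\<in>P. card {l\<in>L. I p l} = q + 1) \<and>
     (\<forall>p\<in>P. \<forall>r\<in>P. p \<noteq> r \<longrightarrow> (\<exists>!l. l \<in> L \<and> I p l \<and> I r l)) \<and>
     (\<forall>l\<in>L. \<forall>m\<in>L. l \<noteq> m \<longrightarrow> (\<exists>!p. p \<in> P \<and> I p l \<and> I p m))"

definition simple_graph :: "'a set \<Rightarrow> 'a set set \<Rightarrow> bool" where
  "simple_graph V E \<longleftrightarrow> finite V \<and> (\<forall>e\<in>E. \<exists>a b. a \<in> V \<and> b \<in> V \<and> a \<noteq> b \<and> e = {a, b})"

definition edge_line :: "'l set \<Rightarrow> ('p \<Rightarrow> 'l \<Rightarrow> bool) \<Rightarrow> ('a \<Rightarrow> 'p) \<Rightarrow> 'a set \<Rightarrow> 'l" where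
  "edge_line L I \<phi> e = (THE l. l \<in> L \<and> (\<forall>v\<in>e. I (\<phi> v) l))"

definition graph_embedding ::
  "'p set \<Rightarrow> 'l set \<Rightarrow> ('p \<Rightarrow> 'l \<Rightarrow> bool) \<Rightarrow> 'a set \<Rightarrow> 'a set set \<Rightarrow> ('a \<Rightarrow> 'p) \<Rightarrow> bool" where
  "graph_embedding P L I V E \<phi> \<longleftrightarrow>
     \<phi> ` V \<subseteq> P \<and> inj_on \<phi> V \<and> inj_on (edge_line L I \<phi>) E"

definition complete_graph_edges :: "nat \<Rightarrow> nat set set" where
  "complete_graph_edges n = {{a, b} | a b. a < n \<and> b < n \<and> a \<noteq> b}"

end

theory Submission
  imports Defs
begin

text \<open>Greedily place the vertices on an arc, i.e. a set of points no three of which are collinear;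
  the lines spanned by distinct pairs of points of an arc are then pairwise distinct. If an arc
  has k points, its at most k(k-1)/2 secants cover at most k + k(k-1)/2 \<cdot> (q+1) points, which is
  less than q^2 + q + 1 as long as k(k+1)/2 \<le> q; so a point off all secants extends the arc.\<close>

locale finite_projective_plane =
  fixes P :: "'p set" and L :: "'l set" and I :: "'p \<Rightarrow> 'l \<Rightarrow> bool" and q :: nat
  assumes plane: "proj_plane_of_order P L I q"
begin

lemma finite_points: "finite P"
  and finite_lines: "finite L"
  and card_points: "card P = q\<^sup>2 + q + 1"
  and card_points_on_line: "l \<in> L \<Longrightarrow> card {p \<in> P. I p l} = q + 1"
  and ex1_line: "p \<in> P \<Longrightarrow> r \<in> P \<Longrightarrow> p \<noteq> r \<Longrightarrow> \<exists>!l. l \<in> L \<and> I p l \<and> I r l"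
  using plane unfolding proj_plane_of_order_def by auto

definition line_through :: "'p set \<Rightarrow> 'l" where
  "line_through S = (THE l. l \<in> L \<and> (\<forall>p\<in>S. I p l))"

lemma line_through_pair_eq:
  assumes "p \<in> P" "r \<in> P" "p \<noteq> r" "l \<in> L" "I p l" "I r l"
  shows "line_through {p, r} = l"
  unfolding line_through_def using ex1_line[OF assms(1-3)] assms(4-6)
  by (auto intro!: the1_equality)

lemma line_through_pair:
  assumes "p \<in> P" "r \<in> P" "p \<noteq> r"
  shows "line_through {p, r} \<in> L" "I p (line_through {p, r})" "I r (line_through {p, r})"
proof -
  obtain l where "l \<in> L" "I p l" "I r l"
    using ex1_line[OF assms] by blast
  with line_through_pair_eq[OF assms] show
    "line_through {p, r} \<in> L" "I p (line_through {p, r})" "I r (line_through {p, r})"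
    by simp_all
qed

definition arc :: "'p set \<Rightarrow> bool" where
  "arc A \<longleftrightarrow> A \<subseteq> P \<and>
     (\<forall>l\<in>L. \<forall>a\<in>A. \<forall>b\<in>A. \<forall>c\<in>A. I a l \<longrightarrow> I b l \<longrightarrow> I c l \<longrightarrow> a = b \<or> a = c \<or> b = c)"

definition secants :: "'p set \<Rightarrow> 'l set" where
  "secants A = {l \<in> L. \<exists>a\<in>A. \<exists>b\<in>A. a \<noteq> b \<and> I a l \<and> I b l}"

lemma card_secants_le:
  assumes "finite A" "A \<subseteq> P"
  shows "card (secants A) \<le> card A choose 2"
proof -
  have "secants A \<subseteq> line_through ` {e. e \<subseteq> A \<and> card e = 2}"
  proof
    fix l assume "l \<in> secants A"
    then obtain a b where "a \<in> A" "b \<in> A" "a \<noteq> b" "l \<in> L" "I a l" "I b l"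
      unfolding secants_def by blast
    with assms(2) have "l = line_through {a, b}"
      using line_through_pair_eq[of a b l] by auto
    moreover have "{a, b} \<in> {e. e \<subseteq> A \<and> card e = 2}"
      using \<open>a \<in> A\<close> \<open>b \<in> A\<close> \<open>a \<noteq> b\<close> by simp
    ultimately show "l \<in> line_through ` {e. e \<subseteq> A \<and> card e = 2}"
      by (rule image_eqI)
  qed
  moreover have "finite {e. e \<subseteq> A \<and> card e = 2}"
    using assms(1) by (simp add: finite_subset[of _ "Pow A"])
  ultimately have "card (secants A) \<le> card (line_through ` {e. e \<subseteq> A \<and> card e = 2})"
    by (intro card_mono finite_imageI)
  also have "\<dots> \<le> card {e. e \<subseteq> A \<and> card e = 2}"
    by (rule card_image_le) fact
  also have "\<dots> = card A choose 2"
    using n_subsets[OF assms(1)] .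
  finally show ?thesis .
qed

lemma card_points_on_secants_le:
  assumes "finite A" "A \<subseteq> P"
  shows "card (\<Union>l\<in>secants A. {p \<in> P. I p l}) \<le> (card A choose 2) * (q + 1)"
proof -
  have "finite (secants A)"
    using finite_lines unfolding secants_def by simp
  then have "card (\<Union>l\<in>secants A. {p \<in> P. I p l}) \<le> (\<Sum>l\<in>secants A. card {p \<in> P. I p l})"
    by (rule card_UN_le)
  also have "\<dots> = card (secants A) * (q + 1)"
    using card_points_on_line by (simp add: secants_def)
  also have "\<dots> \<le> (card A choose 2) * (q + 1)"
    using card_secants_le[OF assms] by (rule mult_le_mono1)
  finally show ?thesis .
qed

lemma arc_insert:
  assumes "arc A" "p \<in> P" "\<forall>l\<in>secants A. \<not> I p l"
  shows "arc (insert p A)"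
proof -
  have "x = y \<or> x = z \<or> y = z"
    if "l \<in> L" "x \<in> insert p A" "y \<in> insert p A" "z \<in> insert p A" "I x l" "I y l" "I z l"
    for l x y z
  proof (cases "p \<in> {x, y, z}")
    case True
    have "\<not> (\<exists>a\<in>A. \<exists>b\<in>A. a \<noteq> b \<and> I a l \<and> I b l)"
      using assms(3) True that unfolding secants_def by blast
    with True that show ?thesis by blast
  next
    case False
    then have "x \<in> A" "y \<in> A" "z \<in> A"
      using that(2-4) by auto
    with assms(1) that(1,5-7) show ?thesis
      unfolding arc_def by blast
  qed
  with assms(1,2) show ?thesis
    unfolding arc_def by blast
qed

lemma arc_extend:
  assumes "arc A" "finite A" "Suc (card A) choose 2 \<le> q"
  shows "\<exists>p\<in>P - A. arc (insert p A)"
proof -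
  define k where "k = card A"
  define F where "F = A \<union> (\<Union>l\<in>secants A. {p \<in> P. I p l})"
  have "A \<subseteq> P"
    using assms(1) unfolding arc_def by simp
  have budget: "(k choose 2) + k \<le> q"
    using assms(3) by (simp add: k_def numeral_2_eq_2)
  have "card F \<le> k + (k choose 2) * (q + 1)"
    unfolding F_def k_def
    using card_Un_le card_points_on_secants_le[OF assms(2) \<open>A \<subseteq> P\<close>]
    by (meson add_left_mono le_trans)
  also have "\<dots> \<le> k * (q + 1) + (k choose 2) * (q + 1)"
    by simp
  also have "\<dots> \<le> q * (q + 1)"
    using mult_le_mono1[OF budget, of "q + 1"] by (simp add: algebra_simps)
  also have "\<dots> < card P"
    by (simp add: card_points power2_eq_square)
  finally have "card F < card P" .
  moreover have "finite F"
    using assms(2) finite_points by (rule finite_subset[rotated, OF finite_UnI]) (auto simp: F_def)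
  ultimately have "\<not> P \<subseteq> F"
    using card_mono by (meson leD)
  then obtain p where "p \<in> P" "p \<notin> F" by blast
  then have "p \<in> P - A" "\<forall>l\<in>secants A. \<not> I p l"
    unfolding F_def by auto
  with arc_insert[OF assms(1)] show ?thesis by blast
qed

lemma ex_arc:
  assumes "n choose 2 \<le> q"
  shows "\<exists>A. arc A \<and> finite A \<and> card A = n"
  using assms
proof (induction n)
  case 0
  show ?case
    by (rule exI[of _ "{}"]) (simp add: arc_def)
next
  case (Suc n)
  then obtain A where "arc A" "finite A" "card A = n"
    using binomial_right_mono[of n "Suc n" 2] by fastforce
  with Suc.prems obtain p where "p \<notin> A" "arc (insert p A)"
    using arc_extend by blast
  with \<open>finite A\<close> \<open>card A = n\<close> show ?case by auto
qed

lemma edge_line_eq_line_through: "edge_line L I \<phi> e = line_through (\<phi> ` e)"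
  by (simp add: edge_line_def line_through_def)

lemma graph_embedding_into_arc:
  assumes "simple_graph V E" "inj_on \<phi> V" "arc (\<phi> ` V)"
  shows "graph_embedding P L I V E \<phi>"
proof -
  have "\<phi> ` V \<subseteq> P"
    using assms(3) unfolding arc_def by simp
  have "e = e'" if "e \<in> E" "e' \<in> E" "edge_line L I \<phi> e = edge_line L I \<phi> e'" for e e'
  proof -
    obtain a b where ab: "a \<in> V" "b \<in> V" "a \<noteq> b" "e = {a, b}"
      using assms(1) \<open>e \<in> E\<close> unfolding simple_graph_def by blast
    obtain c d where cd: "c \<in> V" "d \<in> V" "c \<noteq> d" "e' = {c, d}"
      using assms(1) \<open>e' \<in> E\<close> unfolding simple_graph_def by blast
    define l where "l = line_through {\<phi> a, \<phi> b}"
    have distinct: "\<phi> x \<noteq> \<phi> y" if "x \<in> V" "y \<in> V" "x \<noteq> y" for x y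
      using assms(2) that by (meson inj_onD)
    have "l = line_through {\<phi> c, \<phi> d}"
      using that(3) ab(4) cd(4) by (simp add: l_def edge_line_eq_line_through)
    then have "l \<in> L" "I (\<phi> a) l" "I (\<phi> b) l" "I (\<phi> c) l" "I (\<phi> d) l"
      using line_through_pair[of "\<phi> a" "\<phi> b"] line_through_pair[of "\<phi> c" "\<phi> d"]
        \<open>\<phi> ` V \<subseteq> P\<close> ab cd distinct unfolding l_def by auto
    then have "\<phi> c \<in> {\<phi> a, \<phi> b}" "\<phi> d \<in> {\<phi> a, \<phi> b}"
      using assms(3) ab cd distinct unfolding arc_def by (metis image_eqI insertCI)+
    then have "c \<in> {a, b}" "d \<in> {a, b}"
      using distinct ab cd by blast+
    with ab cd show "e = e'" by auto
  qed
  then show ?thesis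
    unfolding graph_embedding_def using \<open>\<phi> ` V \<subseteq> P\<close> assms(2) by (blast intro: inj_onI)
qed

end

lemma simple_graph_complete_graph: "simple_graph {0..<n} (complete_graph_edges n)"
  unfolding simple_graph_def complete_graph_edges_def by auto

theorem theorem2p15:
  fixes P :: "'p set" and L :: "'l set" and I :: "'p \<Rightarrow> 'l \<Rightarrow> bool" and n q :: nat
  assumes "proj_plane_of_order P L I q"
    and "n * (n - 1) div 2 \<le> q"
  shows "\<exists>\<phi>. graph_embedding P L I {0..<n} (complete_graph_edges n) \<phi>"
proof -
  interpret finite_projective_plane P L I q
    by unfold_locales (fact assms(1))
  obtain A where "arc A" "finite A" "card A = n"
    using ex_arc assms(2) by (auto simp: choose_two)
  then obtain \<phi> where "bij_betw \<phi> {0..<n} A"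
    using ex_bij_betw_nat_finite by blast
  then have "inj_on \<phi> {0..<n}" "arc (\<phi> ` {0..<n})"
    using \<open>arc A\<close> by (auto simp: bij_betw_def)
  then show ?thesis
    using graph_embedding_into_arc simple_graph_complete_graph by blast
qed

end
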